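(* Let $M\ge 1$ be an integer and consider a memoryless channel with binary input alphabet $\{0,1\}$, output alphabet $\mathcal{Y}=\{-M,\dots,0,\dots,M\}$ and transition probabilities $\varepsilon_{y|x}=P_{Y|X}(y|x)$, which is symmetric in the sense that $\varepsilon_{y|1}=\varepsilon_{-y|0}$ for all $y\in\mathcal{Y}$. Let $\mathcal{C}\subseteq\{0,1\}^n$ be a binary linear code of length $n$ with minimum Hamming distance $d_{\min}$ and weight distribution $S_w$ ($S_w$ = number of codewords of Hamming weight $w$), used over this channel with maximum-likelihood decoding. Then the decoding error probability $P_e$ satisfies $$P_e\le \sum_{\substack{\boldsymbol{\ell}=(\ell_{-M},\dots,\ell_M)\in\mathbb{Z}_+^{2M+1}\\ \sum_j\ell_j=n}}\Big(\prod_{j=-M}^M \varepsilon_{j|0}^{\ell_j}\Big)\min\Bigg\{\sum_{w=d_{\min}}^n S_w\sum_{\substack{\boldsymbol{\mu}\in\mathcal{U}_w(\boldsymbol{\ell})\\ \sum_j\mu_j\mathrm{LLR}_j\le 0}}\binom{w}{\mu_{-M},\dots,\mu_M}\binom{n-w}{\ell_{-M}-\mu_{-M},\dots,\ell_M-\mu_M},\ \binom{n}{\ell_{-M},\dots,\ell_M}\Bigg\}.$$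
   Context: $\mathbb{Z}_+$ denotes the nonnegative integers, and $\binom{m}{a_1,\dots,a_k}=\frac{m!}{a_1!\cdots a_k!}$ is the multinomial coefficient (for $a_i\in\mathbb{Z}_+$ with $\sum a_i=m$). For $\boldsymbol{\ell}\in\mathbb{Z}_+^{2M+1}$ with $\sum_j\ell_j=n$ and $0\le w\le n$, $\mathcal{U}_w(\boldsymbol{\ell})=\{\boldsymbol{\mu}=(\mu_{-M},\dots,\mu_M)\in\mathbb{Z}_+^{2M+1}:\ \sum_j\mu_j=w,\ 0\le\mu_j\le\ell_j \text{ for all } j\}$. $\mathrm{LLR}_j=\log(\varepsilon_{j|0}/\varepsilon_{j|1})$; the condition $\sum_j\mu_j\mathrm{LLR}_j\le 0$ means $\prod_j(\varepsilon_{j|0}/\varepsilon_{j|1})^{\mu_j}\le 1$, i.e. a length-$w$ output vector with $\mu_j$ occurrences of symbol $j$ is at least as likely under the all-ones input as under the all-zeros input. By linearity and symmetry the error probability does not depend on the transmitted codeword, and the bound is on the probability that the decoder does not output the transmitted codeword (ties in the likelihood are counted as errors). *)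

theory Defs
  imports Complex_Main
begin

definition out_alph :: "nat \<Rightarrow> int set" where
  "out_alph M = {- int M .. int M}"

text \<open>Binary words of length n are bool lists (True = 1, False = 0).\<close>
definition binary_linear_code :: "nat \<Rightarrow> bool list set \<Rightarrow> bool" where
  "binary_linear_code n C \<longleftrightarrow>
     C \<noteq> {} \<and> (\<forall>c\<in>C. length c = n) \<and>
     (\<forall>c\<in>C. \<forall>c'\<in>C. map2 (\<noteq>) c c' \<in> C)"

definition hweight :: "bool list \<Rightarrow> nat" where
  "hweight c = length (filter id c)"

definition hdist :: "bool list \<Rightarrow> bool list \<Rightarrow> nat" where
  "hdist c c' = length (filter id (map2 (\<noteq>) c c'))"

definition dmin :: "bool list set \<Rightarrow> nat" where
  "dmin C = Min {hdist c c' | c c'. c \<in> C \<and> c' \<in> C \<and> c \<noteq> c'}"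

definition weight_distr :: "bool list set \<Rightarrow> nat \<Rightarrow> nat" where
  "weight_distr C w = card {c \<in> C. hweight c = w}"

text \<open>Memoryless channel: eps y x = P(Y = y | X = x), x \<in> {0,1}.
  Probability that output sequence ys is received when word c is sent.\<close>
definition chan_prob :: "(int \<Rightarrow> nat \<Rightarrow> real) \<Rightarrow> int list \<Rightarrow> bool list \<Rightarrow> real" where
  "chan_prob eps ys c = (\<Prod>i<length c. eps (ys ! i) (if c ! i then 1 else 0))"

definition out_seqs :: "nat \<Rightarrow> nat \<Rightarrow> int list set" where
  "out_seqs M n = {ys. length ys = n \<and> set ys \<subseteq> out_alph M}"

text \<open>Error probability of ML decoding when codeword c is transmitted:
  the probability of the received sequences for which some other codeword is
  at least as likely as c (ties counted as errors).\<close>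
definition ml_error_prob ::
  "nat \<Rightarrow> nat \<Rightarrow> (int \<Rightarrow> nat \<Rightarrow> real) \<Rightarrow> bool list set \<Rightarrow> bool list \<Rightarrow> real" where
  "ml_error_prob M n eps C c =
     (\<Sum>ys\<in>out_seqs M n.
        (if \<exists>c'\<in>C. c' \<noteq> c \<and> chan_prob eps ys c' \<ge> chan_prob eps ys c
         then chan_prob eps ys c else 0))"

text \<open>Multinomial coefficient m! / prod_{j in J} a_j!  (used when sum_J a = m).\<close>
definition multinom :: "nat \<Rightarrow> 'a set \<Rightarrow> ('a \<Rightarrow> nat) \<Rightarrow> real" where
  "multinom m J a = fact m / (\<Prod>j\<in>J. fact (a j))"

definition type_vecs :: "nat \<Rightarrow> nat \<Rightarrow> (int \<Rightarrow> nat) set" where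
  "type_vecs M n = {l. (\<forall>j. j \<notin> out_alph M \<longrightarrow> l j = 0) \<and> (\<Sum>j\<in>out_alph M. l j) = n}"

definition U_set :: "nat \<Rightarrow> nat \<Rightarrow> (int \<Rightarrow> nat) \<Rightarrow> (int \<Rightarrow> nat) set" where
  "U_set M w l = {mu. (\<forall>j. j \<notin> out_alph M \<longrightarrow> mu j = 0) \<and> (\<Sum>j\<in>out_alph M. mu j) = w
                      \<and> (\<forall>j\<in>out_alph M. mu j \<le> l j)}"

text \<open>The condition sum_j mu_j LLR_j <= 0, written (as in the paper's explanation)
  as prod_j (eps_{j|0}/eps_{j|1})^{mu_j} <= 1, cleared of denominators.\<close>
definition llr_nonpos :: "nat \<Rightarrow> (int \<Rightarrow> nat \<Rightarrow> real) \<Rightarrow> (int \<Rightarrow> nat) \<Rightarrow> bool" where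
  "llr_nonpos M eps mu \<longleftrightarrow>
     (\<Prod>j\<in>out_alph M. eps j 0 ^ mu j) \<le> (\<Prod>j\<in>out_alph M. eps j 1 ^ mu j)"

definition the_bound ::
  "nat \<Rightarrow> nat \<Rightarrow> (int \<Rightarrow> nat \<Rightarrow> real) \<Rightarrow> bool list set \<Rightarrow> real" where
  "the_bound M n eps C =
    (\<Sum>l\<in>type_vecs M n.
       (\<Prod>j\<in>out_alph M. eps j 0 ^ l j) *
       min (\<Sum>w = dmin C..n. real (weight_distr C w) *
              (\<Sum>mu\<in>{mu \<in> U_set M w l. llr_nonpos M eps mu}.
                 multinom w (out_alph M) mu *
                 multinom (n - w) (out_alph M) (\<lambda>j. l j - mu j)))
           (multinom n (out_alph M) l))"

end

(*
  Since the channel is symmetric and the code is linear, negating the outputs at the positions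
  where the transmitted codeword c is 1 turns the likelihood of every codeword d into that of
  d + c.  This bijection of output sequences shows that the error probability is the same for c
  as for the all-zero word.

  For the all-zero word, an output y with P(y|0) > 0 is decoded wrongly only if
  P(y|d) >= P(y|0) for some nonzero codeword d.  The positions outside the support of d
  contribute the same factor to both sides, so this is the condition
  prod_j (eps_{j|0} / eps_{j|1})^{mu_j} <= 1 on the type mu of y restricted to that support.
  Grouping the outputs by their type l gives P(y|0) = prod_j eps_{j|0}^{l_j}, and the number of
  erroneous outputs of type l is bounded by the size of the type class, a multinomial
  coefficient, and, by the union bound over d (grouped by weight w) and over the sub-type mu on
  the support of d, by sum_w S_w sum_mu multinom(w; mu) multinom(n - w; l - mu).
*)
theory Submission
  imports Defs "HOL-Combinatorics.Multiset_Permutations"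
begin

definition type_on :: "'a list \<Rightarrow> nat set \<Rightarrow> 'a \<Rightarrow> nat" where
  "type_on xs S j = card {i\<in>S. xs ! i = j}"

definition lists_of_type :: "'a set \<Rightarrow> nat \<Rightarrow> ('a \<Rightarrow> nat) \<Rightarrow> 'a list set" where
  "lists_of_type J m a = {xs. length xs = m \<and> set xs \<subseteq> J \<and> (\<forall>j\<in>J. type_on xs {..<m} j = a j)}"

lemma multinom_nonneg: "multinom m J a \<ge> 0"
  unfolding multinom_def by (simp add: prod_nonneg)

lemma count_mset_eq_type_on: "count (mset xs) j = type_on xs {..<length xs} j"
  by (simp add: type_on_def count_mset count_list_eq_length_filter length_filter_conv_card
      eq_commute)

lemma type_on_map_nth:
  assumes "distinct L"
  shows "type_on (map ((!) xs) L) {..<length L} j = type_on xs (set L) j"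
proof -
  have inj: "inj_on ((!) L) {i\<in>{..<length L}. map ((!) xs) L ! i = j}"
    using assms by (auto simp: inj_on_def nth_eq_iff_index_eq)
  have "(!) L ` {i\<in>{..<length L}. map ((!) xs) L ! i = j} = {i\<in>set L. xs ! i = j}"
    by (auto simp: in_set_conv_nth)
  then show ?thesis
    unfolding type_on_def using card_image[OF inj] by simp
qed

lemma type_on_mono: "S \<subseteq> T \<Longrightarrow> finite T \<Longrightarrow> type_on xs S j \<le> type_on xs T j"
  unfolding type_on_def by (rule card_mono) auto

lemma type_on_Diff:
  assumes "S \<subseteq> T" "finite T"
  shows "type_on xs (T - S) j = type_on xs T j - type_on xs S j"
proof -
  have "{i\<in>T - S. xs ! i = j} = {i\<in>T. xs ! i = j} - {i\<in>S. xs ! i = j}" by auto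
  then show ?thesis
    unfolding type_on_def using assms by (simp add: card_Diff_subset finite_subset subset_iff)
qed

lemma type_on_outside:
  assumes "\<forall>i\<in>S. xs ! i \<in> J" "j \<notin> J"
  shows "type_on xs S j = 0"
proof -
  have "{i\<in>S. xs ! i = j} = {}" using assms by auto
  then show ?thesis unfolding type_on_def by (metis card.empty)
qed

lemma prod_nth_eq_prod_power_type_on:
  assumes "finite S" "finite J" "\<forall>i\<in>S. xs ! i \<in> J"
  shows "(\<Prod>i\<in>S. f (xs ! i)) = (\<Prod>j\<in>J. f j ^ type_on xs S j)"
proof -
  have "(\<Prod>i\<in>S. f (xs ! i)) = (\<Prod>j\<in>J. \<Prod>i\<in>{i\<in>S. xs ! i = j}. f (xs ! i))"
    using assms by (intro prod.group[symmetric]) auto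
  also have "\<dots> = (\<Prod>j\<in>J. f j ^ type_on xs S j)"
  proof (rule prod.cong[OF refl])
    fix j
    have "(\<Prod>i\<in>{i\<in>S. xs ! i = j}. f (xs ! i)) = (\<Prod>i\<in>{i\<in>S. xs ! i = j}. f j)"
      by (rule prod.cong) auto
    then show "(\<Prod>i\<in>{i\<in>S. xs ! i = j}. f (xs ! i)) = f j ^ type_on xs S j"
      by (simp add: type_on_def)
  qed
  finally show ?thesis .
qed

lemma sum_type_on:
  assumes "finite S" "finite J" "\<forall>i\<in>S. xs ! i \<in> J"
  shows "(\<Sum>j\<in>J. type_on xs S j) = card S"
proof -
  have "card S = (\<Sum>j\<in>J. card {i\<in>S. xs ! i = j})"
    using assms sum.group[of S J "(!) xs" "\<lambda>_. 1::nat"] by force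
  then show ?thesis unfolding type_on_def by simp
qed

lemma finite_lists_of_type: "finite J \<Longrightarrow> finite (lists_of_type J m a)"
  by (rule finite_subset[OF _ finite_lists_length_eq[of J m]]) (auto simp: lists_of_type_def)

lemma card_lists_of_type_le_multinom:
  assumes "finite J"
  shows "real (card (lists_of_type J m a)) \<le> multinom m J a"
proof (cases "lists_of_type J m a = {}")
  case True
  then show ?thesis by (simp add: multinom_nonneg)
next
  case False
  then obtain xs0 where xs0: "xs0 \<in> lists_of_type J m a" by blast
  define A where "A = mset xs0"
  have count_A: "count (mset xs) j = (if j \<in> J then a j else 0)"
    if "xs \<in> lists_of_type J m a" for xs j
  proof (cases "j \<in> J")
    case True
    then show ?thesis using that count_mset_eq_type_on[of xs j] by (simp add: lists_of_type_def)
  next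
    case False
    then have "j \<notin> set xs" using that by (auto simp: lists_of_type_def)
    then show ?thesis using False by (simp add: count_mset count_list_0_iff)
  qed
  have "lists_of_type J m a \<subseteq> permutations_of_multiset A"
    using count_A xs0 by (auto simp: A_def permutations_of_multiset_def intro: multiset_eqI)
  then have "card (lists_of_type J m a) \<le> card (permutations_of_multiset A)"
    by (intro card_mono finite_permutations_of_multiset)
  also have "real (card (permutations_of_multiset A)) = fact m / (\<Prod>x\<in>set_mset A. fact (count A x))"
  proof -
    have "real (card (permutations_of_multiset A) * (\<Prod>x\<in>set_mset A. fact (count A x))) = fact m"
      using xs0 by (subst card_permutations_of_multiset_aux) (simp add: A_def lists_of_type_def)
    then show ?thesis by (simp add: eq_divide_eq prod_pos)
  qed
  also have "(\<Prod>x\<in>set_mset A. fact (count A x)) = (\<Prod>j\<in>J. fact (a j) :: real)"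
  proof (rule prod.mono_neutral_cong_left)
    show "finite J" by fact
    show "set_mset A \<subseteq> J" using xs0 by (auto simp: A_def lists_of_type_def)
    show "\<forall>j\<in>J - set_mset A. fact (a j) = (1::real)"
    proof
      fix j assume j: "j \<in> J - set_mset A"
      then have "count (mset xs0) j = 0" by (simp add: A_def)
      then show "fact (a j) = (1::real)" using j count_A[OF xs0, of j] by simp
    qed
    show "fact (count A x) = fact (a x)" if "x \<in># A" for x
      using that count_A[OF xs0, of x] \<open>set_mset A \<subseteq> J\<close> by (auto simp: A_def)
  qed
  finally show ?thesis unfolding multinom_def by simp
qed

lemma inj_on_map_nth_pair:
  assumes "set L \<union> set L' = {..<n}"
  shows "inj_on (\<lambda>xs. (map ((!) xs) L, map ((!) xs) L')) {xs. length xs = n}"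
proof (rule inj_onI)
  fix xs ys :: "'a list"
  assume "xs \<in> {xs. length xs = n}" "ys \<in> {xs. length xs = n}"
    and "(map ((!) xs) L, map ((!) xs) L') = (map ((!) ys) L, map ((!) ys) L')"
  then show "xs = ys"
    using assms by (intro nth_equalityI) (auto simp: map_eq_conv)
qed

lemma card_lists_of_split_type_le:
  assumes "finite J" "S \<subseteq> {..<n}"
  shows "real (card {xs \<in> lists_of_type J n l. \<forall>j\<in>J. type_on xs S j = mu j})
    \<le> multinom (card S) J mu * multinom (n - card S) J (\<lambda>j. l j - mu j)"
proof -
  define X where "X = {xs \<in> lists_of_type J n l. \<forall>j\<in>J. type_on xs S j = mu j}"
  define A where "A = lists_of_type J (card S) mu"
  define B where "B = lists_of_type J (n - card S) (\<lambda>j. l j - mu j)"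
  define L where "L = sorted_list_of_set S"
  define L' where "L' = sorted_list_of_set ({..<n} - S)"
  define F where "F xs = (map ((!) xs) L, map ((!) xs) L')" for xs :: "'a list"
  have "finite S" using assms(2) finite_subset by blast
  then have L: "distinct L" "set L = S" "length L = card S"
    by (auto simp: L_def)
  have L': "distinct L'" "set L' = {..<n} - S" "length L' = n - card S"
    using assms(2) \<open>finite S\<close> by (auto simp: L'_def card_Diff_subset)
  have "set L \<union> set L' = {..<n}"
    using L(2) L'(2) assms(2) by auto
  then have "inj_on F X"
    unfolding F_def
    by (rule inj_on_subset[OF inj_on_map_nth_pair]) (auto simp: X_def lists_of_type_def)
  moreover have "F ` X \<subseteq> A \<times> B"
  proof (rule image_subsetI)
    fix xs assume xs: "xs \<in> X"
    then have "set (map ((!) xs) L) \<subseteq> J" "set (map ((!) xs) L') \<subseteq> J"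
      using L L' assms(2) by (auto simp: X_def lists_of_type_def dest!: nth_mem)
    moreover have "type_on xs ({..<n} - S) j = l j - mu j" if "j \<in> J" for j
      using xs that type_on_Diff[OF assms(2), of xs j] by (simp add: X_def lists_of_type_def)
    moreover have "type_on (map ((!) xs) L) {..<card S} j = type_on xs S j" for j
      using type_on_map_nth[OF L(1), of xs j] L by simp
    moreover have "type_on (map ((!) xs) L') {..<n - card S} j = type_on xs ({..<n} - S) j" for j
      using type_on_map_nth[OF L'(1), of xs j] L' by simp
    ultimately show "F xs \<in> A \<times> B"
      using xs L(3) L'(3) by (auto simp: F_def X_def A_def B_def lists_of_type_def)
  qed
  moreover have "finite A" "finite B"
    using finite_lists_of_type[OF assms(1)] by (simp_all add: A_def B_def)
  ultimately have "card X \<le> card A * card B"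
    unfolding card_cartesian_product[symmetric] by (intro card_inj_on_le) auto
  then have "real (card X) \<le> real (card A) * real (card B)"
    by (simp only: of_nat_le_iff flip: of_nat_mult)
  also have "\<dots> \<le> multinom (card S) J mu * multinom (n - card S) J (\<lambda>j. l j - mu j)"
    unfolding A_def B_def
    by (intro mult_mono card_lists_of_type_le_multinom assms(1) multinom_nonneg) simp
  finally show ?thesis unfolding X_def .
qed

lemma finite_out_alph [simp]: "finite (out_alph M)"
  by (simp add: out_alph_def)

lemma finite_out_seqs: "finite (out_seqs M n)"
  by (rule finite_subset[OF _ finite_lists_length_eq[OF finite_out_alph, of M n]])
    (auto simp: out_seqs_def)

lemma out_seqs_nth_mem: "ys \<in> out_seqs M n \<Longrightarrow> i < n \<Longrightarrow> ys ! i \<in> out_alph M"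
  by (auto simp: out_seqs_def)

lemma finite_funs_with_sum:
  assumes "finite J"
  shows "finite {f :: 'a \<Rightarrow> nat. (\<forall>j. j \<notin> J \<longrightarrow> f j = 0) \<and> (\<Sum>j\<in>J. f j) = k}"
proof (rule finite_subset)
  show "{f. (\<forall>j. j \<notin> J \<longrightarrow> f j = 0) \<and> (\<Sum>j\<in>J. f j) = k}
    \<subseteq> {f. \<forall>j. (j \<in> J \<longrightarrow> f j \<in> {..k}) \<and> (j \<notin> J \<longrightarrow> f j = 0)}"
    using assms by (auto intro: member_le_sum[THEN order_trans])
  show "finite {f. \<forall>j. (j \<in> J \<longrightarrow> f j \<in> {..k}) \<and> (j \<notin> J \<longrightarrow> f j = (0::nat))}"
    using assms by (intro finite_set_of_finite_funs) auto
qed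

lemma finite_type_vecs: "finite (type_vecs M n)"
  unfolding type_vecs_def by (rule finite_funs_with_sum) simp

lemma finite_U_set: "finite (U_set M w l)"
  by (rule finite_subset[OF _ finite_funs_with_sum[OF finite_out_alph, of M w]])
    (auto simp: U_set_def)

definition seqs_of_type :: "nat \<Rightarrow> nat \<Rightarrow> (int \<Rightarrow> nat) \<Rightarrow> int list set" where
  "seqs_of_type M n l = {ys \<in> out_seqs M n. type_on ys {..<n} = l}"

lemma seqs_of_type_subset_lists_of_type: "seqs_of_type M n l \<subseteq> lists_of_type (out_alph M) n l"
  by (auto simp: seqs_of_type_def out_seqs_def lists_of_type_def)

lemma card_seqs_of_type_le_multinom: "real (card (seqs_of_type M n l)) \<le> multinom n (out_alph M) l"
proof -
  have "card (seqs_of_type M n l) \<le> card (lists_of_type (out_alph M) n l)"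
    by (intro card_mono finite_lists_of_type seqs_of_type_subset_lists_of_type finite_out_alph)
  then show ?thesis
    using card_lists_of_type_le_multinom[OF finite_out_alph] by (meson of_nat_le_iff order_trans)
qed

lemma type_on_mem_U_set:
  assumes "ys \<in> out_seqs M n" "S \<subseteq> {..<n}"
  shows "type_on ys S \<in> U_set M (card S) (type_on ys {..<n})"
proof -
  have "\<forall>i\<in>S. ys ! i \<in> out_alph M"
    using assms by (auto intro: out_seqs_nth_mem)
  then show ?thesis
    using assms(2) finite_subset[OF assms(2)]
    by (auto simp: U_set_def type_on_outside sum_type_on intro: type_on_mono)
qed

lemma type_on_mem_type_vecs:
  assumes "ys \<in> out_seqs M n"
  shows "type_on ys {..<n} \<in> type_vecs M n"
  using type_on_mem_U_set[OF assms order_refl] by (simp add: U_set_def type_vecs_def)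

lemma sum_out_seqs_by_type:
  "(\<Sum>ys\<in>out_seqs M n. f ys) = (\<Sum>l\<in>type_vecs M n. \<Sum>ys\<in>seqs_of_type M n l. f ys)"
  unfolding seqs_of_type_def
  by (rule sum.group[symmetric]) (auto simp: finite_out_seqs finite_type_vecs type_on_mem_type_vecs)

lemma sum_seqs_of_type_if:
  "(\<Sum>ys\<in>seqs_of_type M n l. if Q ys then f (type_on ys {..<n}) else 0)
    = f l * real (card {ys \<in> seqs_of_type M n l. Q ys})"
proof -
  have "(\<Sum>ys\<in>seqs_of_type M n l. if Q ys then f (type_on ys {..<n}) else 0)
      = (\<Sum>ys\<in>seqs_of_type M n l. if Q ys then f l else 0)"
    by (rule sum.cong) (auto simp: seqs_of_type_def)
  also have "\<dots> = f l * real (card {ys \<in> seqs_of_type M n l. Q ys})"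
    using finite_out_seqs by (simp add: sum.If_cases seqs_of_type_def Int_def conj_commute)
  finally show ?thesis .
qed

definition word_support :: "bool list \<Rightarrow> nat set" where
  "word_support d = {i. i < length d \<and> d ! i}"

lemma word_support_subset: "word_support d \<subseteq> {..<length d}"
  by (auto simp: word_support_def)

lemma hweight_eq_card_word_support: "hweight d = card (word_support d)"
  by (simp add: hweight_def word_support_def length_filter_conv_card)

lemma chan_prob_zero_word_eq_prod_type:
  assumes "ys \<in> out_seqs M n"
  shows "chan_prob eps ys (replicate n False) = (\<Prod>j\<in>out_alph M. eps j 0 ^ type_on ys {..<n} j)"
  unfolding chan_prob_def using assms
  by (simp add: prod_nth_eq_prod_power_type_on[where f = "\<lambda>y. eps y 0"] out_seqs_nth_mem)

lemma chan_prob_split_word_support: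
  "chan_prob eps ys d
    = (\<Prod>i\<in>word_support d. eps (ys ! i) 1) * (\<Prod>i\<in>{..<length d} - word_support d. eps (ys ! i) 0)"
proof -
  have "chan_prob eps ys d
      = (\<Prod>i\<in>{..<length d} - word_support d. eps (ys ! i) (if d ! i then 1 else 0))
        * (\<Prod>i\<in>word_support d. eps (ys ! i) (if d ! i then 1 else 0))"
    unfolding chan_prob_def by (rule prod.subset_diff[OF word_support_subset]) simp
  also have "\<dots> = (\<Prod>i\<in>{..<length d} - word_support d. eps (ys ! i) 0)
      * (\<Prod>i\<in>word_support d. eps (ys ! i) 1)"
    by (intro arg_cong2[where f = "(*)"] prod.cong) (auto simp: word_support_def)
  finally show ?thesis by simp
qed

lemma llr_nonpos_if_zero_word_not_more_likely:
  assumes nonneg: "\<forall>y\<in>out_alph M. \<forall>x\<in>{0,1}. eps y x \<ge> 0"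
    and ys: "ys \<in> out_seqs M n" and d: "length d = n"
    and pos: "0 < chan_prob eps ys (replicate n False)"
    and le: "chan_prob eps ys (replicate n False) \<le> chan_prob eps ys d"
  shows "llr_nonpos M eps (type_on ys (word_support d))"
proof -
  let ?S = "word_support d"
  define R where "R = (\<Prod>i\<in>{..<n} - ?S. eps (ys ! i) 0)"
  have S: "?S \<subseteq> {..<n}" "finite ?S" "\<forall>i\<in>?S. ys ! i \<in> out_alph M"
    using word_support_subset[of d] d ys finite_subset by (auto intro: out_seqs_nth_mem)
  have prob_d: "chan_prob eps ys d = (\<Prod>i\<in>?S. eps (ys ! i) 1) * R"
    using chan_prob_split_word_support[of eps ys d] d by (simp add: R_def)
  have "chan_prob eps ys (replicate n False) = (\<Prod>i\<in>{..<n}. eps (ys ! i) 0)"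
    by (simp add: chan_prob_def)
  also have "\<dots> = R * (\<Prod>i\<in>?S. eps (ys ! i) 0)"
    unfolding R_def by (rule prod.subset_diff[OF S(1)]) simp
  finally have prob_zero: "chan_prob eps ys (replicate n False) = (\<Prod>i\<in>?S. eps (ys ! i) 0) * R"
    by simp
  have "R \<ge> 0"
    unfolding R_def using nonneg ys by (auto intro!: prod_nonneg dest: out_seqs_nth_mem)
  with pos prob_zero have "R > 0"
    by (metis less_eq_real_def mult_zero_right)
  with le prob_d prob_zero have "(\<Prod>i\<in>?S. eps (ys ! i) 0) \<le> (\<Prod>i\<in>?S. eps (ys ! i) 1)"
    by simp
  then show ?thesis
    unfolding llr_nonpos_def
    using prod_nth_eq_prod_power_type_on[OF S(2) finite_out_alph S(3), of "\<lambda>y. eps y 0"]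
      prod_nth_eq_prod_power_type_on[OF S(2) finite_out_alph S(3), of "\<lambda>y. eps y 1"]
    by simp
qed

definition pairwise_error_count ::
  "nat \<Rightarrow> nat \<Rightarrow> (int \<Rightarrow> nat \<Rightarrow> real) \<Rightarrow> (int \<Rightarrow> nat) \<Rightarrow> nat \<Rightarrow> real" where
  "pairwise_error_count M n eps l w =
     (\<Sum>mu\<in>{mu \<in> U_set M w l. llr_nonpos M eps mu}.
        multinom w (out_alph M) mu * multinom (n - w) (out_alph M) (\<lambda>j. l j - mu j))"

lemma pairwise_error_count_nonneg: "pairwise_error_count M n eps l w \<ge> 0"
  unfolding pairwise_error_count_def by (intro sum_nonneg mult_nonneg_nonneg multinom_nonneg)

lemma card_llr_event_le_pairwise_error_count:
  assumes "length d = n"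
  shows "real (card {ys \<in> seqs_of_type M n l. llr_nonpos M eps (type_on ys (word_support d))})
    \<le> pairwise_error_count M n eps l (hweight d)"
proof -
  let ?S = "word_support d" and ?J = "out_alph M"
  define E where "E = {ys \<in> seqs_of_type M n l. llr_nonpos M eps (type_on ys ?S)}"
  define U where "U = {mu \<in> U_set M (card ?S) l. llr_nonpos M eps mu}"
  define Z where "Z mu = {ys \<in> lists_of_type ?J n l. \<forall>j\<in>?J. type_on ys ?S j = mu j}" for mu
  have S: "?S \<subseteq> {..<n}"
    using word_support_subset[of d] assms by simp
  have finU: "finite U"
    using finite_U_set by (simp add: U_def)
  have "E \<subseteq> (\<Union>mu\<in>U. Z mu)"
  proof
    fix ys assume ys: "ys \<in> E"
    then have "type_on ys ?S \<in> U"
      using type_on_mem_U_set[OF _ S, of ys] by (simp add: E_def U_def seqs_of_type_def)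
    moreover have "ys \<in> Z (type_on ys ?S)"
      using ys seqs_of_type_subset_lists_of_type by (auto simp: E_def Z_def)
    ultimately show "ys \<in> (\<Union>mu\<in>U. Z mu)" by blast
  qed
  moreover have "finite (\<Union>mu\<in>U. Z mu)"
    using finU finite_lists_of_type[OF finite_out_alph] by (simp add: Z_def)
  ultimately have "card E \<le> (\<Sum>mu\<in>U. card (Z mu))"
    using card_UN_le[OF finU, of Z] by (meson card_mono order_trans)
  then have "real (card E) \<le> (\<Sum>mu\<in>U. real (card (Z mu)))"
    by (simp only: of_nat_le_iff flip: of_nat_sum)
  also have "\<dots> \<le> (\<Sum>mu\<in>U. multinom (card ?S) ?J mu * multinom (n - card ?S) ?J (\<lambda>j. l j - mu j))"
    unfolding Z_def by (intro sum_mono card_lists_of_split_type_le finite_out_alph S)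
  finally show ?thesis
    by (simp add: E_def pairwise_error_count_def U_def hweight_eq_card_word_support)
qed

lemma binary_linear_code_length: "binary_linear_code n C \<Longrightarrow> d \<in> C \<Longrightarrow> length d = n"
  by (simp add: binary_linear_code_def)

lemma binary_linear_code_finite: "binary_linear_code n C \<Longrightarrow> finite C"
  by (rule finite_subset[OF _ finite_lists_length_eq[OF finite_UNIV, of n]])
    (auto dest: binary_linear_code_length)

lemma map2_xor_self: "map2 (\<noteq>) c c = replicate (length c) False"
  by (intro nth_equalityI) auto

lemma map2_xor_cancel: "length d = length c \<Longrightarrow> map2 (\<noteq>) (map2 (\<noteq>) d c) c = d"
  by (intro nth_equalityI) auto

lemma binary_linear_code_zero_mem:
  assumes "binary_linear_code n C"
  shows "replicate n False \<in> C"
proof -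
  obtain c where c: "c \<in> C"
    using assms by (auto simp: binary_linear_code_def)
  then have "map2 (\<noteq>) c c \<in> C"
    using assms by (simp add: binary_linear_code_def)
  then show ?thesis
    using map2_xor_self[of c] binary_linear_code_length[OF assms c] by simp
qed

lemma binary_linear_code_translate_bij:
  assumes code: "binary_linear_code n C" and "c \<in> C"
  shows "bij_betw (\<lambda>d. map2 (\<noteq>) d c) C C"
proof (rule bij_betw_byWitness[where f' = "\<lambda>d. map2 (\<noteq>) d c"])
  have "length d = length c" if "d \<in> C" for d
    using that \<open>c \<in> C\<close> binary_linear_code_length[OF code] by simp
  then show "\<forall>d\<in>C. map2 (\<noteq>) (map2 (\<noteq>) d c) c = d"
    using map2_xor_cancel by blast
  then show "\<forall>d\<in>C. map2 (\<noteq>) (map2 (\<noteq>) d c) c = d" .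
  show "(\<lambda>d. map2 (\<noteq>) d c) ` C \<subseteq> C"
    using code \<open>c \<in> C\<close> by (auto simp: binary_linear_code_def)
  then show "(\<lambda>d. map2 (\<noteq>) d c) ` C \<subseteq> C" .
qed

lemma dmin_le_hweight:
  assumes code: "binary_linear_code n C" and d: "d \<in> C" "d \<noteq> replicate n False"
  shows "dmin C \<le> hweight d"
proof -
  let ?D = "{hdist c c' | c c'. c \<in> C \<and> c' \<in> C \<and> c \<noteq> c'}"
  have "map2 (\<noteq>) d (replicate n False) = d"
    using binary_linear_code_length[OF code d(1)] by (intro nth_equalityI) auto
  then have weight: "hdist d (replicate n False) = hweight d"
    by (simp add: hdist_def hweight_def)
  have "?D \<subseteq> case_prod hdist ` (C \<times> C)"
    by auto
  then have "finite ?D"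
    using binary_linear_code_finite[OF code] finite_subset by blast
  moreover have "hdist d (replicate n False) \<in> ?D"
    using d binary_linear_code_zero_mem[OF code] by blast
  ultimately show ?thesis
    unfolding dmin_def weight[symmetric] by (rule Min_le)
qed

lemma sum_nonzero_codewords_by_weight_le:
  assumes code: "binary_linear_code n C" and nonneg: "\<And>w. g w \<ge> (0::real)"
  shows "(\<Sum>d\<in>C - {replicate n False}. g (hweight d))
    \<le> (\<Sum>w = dmin C..n. real (weight_distr C w) * g w)"
proof -
  let ?z = "replicate n False"
  have finC: "finite C"
    using binary_linear_code_finite[OF code] .
  have "hweight ` (C - {?z}) \<subseteq> {dmin C..n}"
  proof (rule image_subsetI)
    fix d assume d: "d \<in> C - {?z}"
    have "hweight d \<le> length d"
      unfolding hweight_def by (rule length_filter_le)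
    then show "hweight d \<in> {dmin C..n}"
      using d dmin_le_hweight[OF code] binary_linear_code_length[OF code] by simp
  qed
  then have "(\<Sum>d\<in>C - {?z}. g (hweight d))
      = (\<Sum>w = dmin C..n. \<Sum>d\<in>{d \<in> C - {?z}. hweight d = w}. g (hweight d))"
    using finC by (intro sum.group[symmetric]) auto
  also have "\<dots> \<le> (\<Sum>w = dmin C..n. real (weight_distr C w) * g w)"
  proof (rule sum_mono)
    fix w
    have "card {d \<in> C - {?z}. hweight d = w} \<le> weight_distr C w"
      unfolding weight_distr_def using finC by (intro card_mono) auto
    then show "(\<Sum>d\<in>{d \<in> C - {?z}. hweight d = w}. g (hweight d)) \<le> real (weight_distr C w) * g w"
      using nonneg[of w] by (simp add: mult_right_mono)
  qed
  finally show ?thesis .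
qed

lemma card_llr_error_event_le:
  assumes code: "binary_linear_code n C"
  shows "real (card {ys \<in> seqs_of_type M n l.
            \<exists>d\<in>C - {replicate n False}. llr_nonpos M eps (type_on ys (word_support d))})
    \<le> (\<Sum>w = dmin C..n. real (weight_distr C w) * pairwise_error_count M n eps l w)"
proof -
  let ?z = "replicate n False"
  define E where
    "E d = {ys \<in> seqs_of_type M n l. llr_nonpos M eps (type_on ys (word_support d))}" for d
  have "{ys \<in> seqs_of_type M n l. \<exists>d\<in>C - {?z}. llr_nonpos M eps (type_on ys (word_support d))}
      = (\<Union>d\<in>C - {?z}. E d)" (is "?X = _")
    by (auto simp: E_def)
  moreover have "card (\<Union>d\<in>C - {?z}. E d) \<le> (\<Sum>d\<in>C - {?z}. card (E d))"
    using binary_linear_code_finite[OF code] by (intro card_UN_le) simp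
  ultimately have "real (card ?X) \<le> (\<Sum>d\<in>C - {?z}. real (card (E d)))"
    by (simp only: of_nat_le_iff flip: of_nat_sum)
  also have "\<dots> \<le> (\<Sum>d\<in>C - {?z}. pairwise_error_count M n eps l (hweight d))"
    unfolding E_def using binary_linear_code_length[OF code]
    by (intro sum_mono card_llr_event_le_pairwise_error_count) blast
  also have "\<dots> \<le> (\<Sum>w = dmin C..n. real (weight_distr C w) * pairwise_error_count M n eps l w)"
    by (rule sum_nonzero_codewords_by_weight_le[OF code pairwise_error_count_nonneg])
  finally show ?thesis .
qed

lemma ml_error_prob_zero_word_le_the_bound:
  assumes nonneg: "\<forall>y\<in>out_alph M. \<forall>x\<in>{0,1}. eps y x \<ge> 0"
    and code: "binary_linear_code n C"
  shows "ml_error_prob M n eps C (replicate n False) \<le> the_bound M n eps C"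
proof -
  let ?z = "replicate n False" and ?J = "out_alph M" and ?Y = "out_seqs M n"
  define P where "P l = (\<Prod>j\<in>?J. eps j 0 ^ l j)" for l
  define err where
    "err ys \<longleftrightarrow> (\<exists>d\<in>C - {?z}. llr_nonpos M eps (type_on ys (word_support d)))" for ys
  define B where
    "B l = (\<Sum>w = dmin C..n. real (weight_distr C w) * pairwise_error_count M n eps l w)" for l
  have P_nonneg: "P l \<ge> 0" for l
    unfolding P_def using nonneg by (auto intro: prod_nonneg)
  have prob_zero: "chan_prob eps ys ?z = P (type_on ys {..<n})" if "ys \<in> ?Y" for ys
    using chan_prob_zero_word_eq_prod_type[OF that] by (simp add: P_def)
  have pointwise: "(if \<exists>d\<in>C. d \<noteq> ?z \<and> chan_prob eps ys d \<ge> chan_prob eps ys ?z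
        then chan_prob eps ys ?z else 0)
      \<le> (if err ys then P (type_on ys {..<n}) else 0)" if ys: "ys \<in> ?Y" for ys
    using llr_nonpos_if_zero_word_not_more_likely[OF nonneg ys] binary_linear_code_length[OF code]
      prob_zero[OF ys] P_nonneg[of "type_on ys {..<n}"]
    by (cases "chan_prob eps ys ?z = 0") (auto simp: err_def)
  have "ml_error_prob M n eps C ?z \<le> (\<Sum>ys\<in>?Y. if err ys then P (type_on ys {..<n}) else 0)"
    unfolding ml_error_prob_def by (rule sum_mono) (rule pointwise)
  also have "\<dots> = (\<Sum>l\<in>type_vecs M n. P l * real (card {ys \<in> seqs_of_type M n l. err ys}))"
    unfolding sum_out_seqs_by_type sum_seqs_of_type_if ..
  also have "\<dots> \<le> (\<Sum>l\<in>type_vecs M n. P l * min (B l) (multinom n ?J l))"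
  proof (intro sum_mono mult_left_mono P_nonneg min.boundedI)
    fix l
    show "real (card {ys \<in> seqs_of_type M n l. err ys}) \<le> B l"
      unfolding err_def B_def by (rule card_llr_error_event_le[OF code])
    have "card {ys \<in> seqs_of_type M n l. err ys} \<le> card (seqs_of_type M n l)"
      using finite_out_seqs by (intro card_mono) (auto simp: seqs_of_type_def)
    then show "real (card {ys \<in> seqs_of_type M n l. err ys}) \<le> multinom n ?J l"
      using card_seqs_of_type_le_multinom[of M n l] by linarith
  qed
  also have "\<dots> = the_bound M n eps C"
    by (simp add: the_bound_def P_def B_def pairwise_error_count_def)
  finally show ?thesis .
qed

definition flip_outputs :: "bool list \<Rightarrow> int list \<Rightarrow> int list" where
  "flip_outputs c ys = map2 (\<lambda>b y. if b then - y else y) c ys"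

lemma uminus_mem_out_alph: "y \<in> out_alph M \<Longrightarrow> - y \<in> out_alph M"
  by (auto simp: out_alph_def)

lemma flip_outputs_mem_out_seqs:
  assumes "length c = n" "ys \<in> out_seqs M n"
  shows "flip_outputs c ys \<in> out_seqs M n"
proof -
  have "flip_outputs c ys ! i \<in> out_alph M" if "i < n" for i
    using assms that out_seqs_nth_mem[OF assms(2) that] uminus_mem_out_alph
    by (auto simp: flip_outputs_def out_seqs_def)
  then show ?thesis
    using assms by (auto simp: flip_outputs_def out_seqs_def set_conv_nth)
qed

lemma flip_outputs_flip_outputs:
  "length c = length ys \<Longrightarrow> flip_outputs c (flip_outputs c ys) = ys"
  by (intro nth_equalityI) (auto simp: flip_outputs_def)

lemma chan_prob_flip_outputs:
  assumes sym: "\<forall>y\<in>out_alph M. eps y 1 = eps (- y) 0"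
    and ys: "ys \<in> out_seqs M n" and c: "length c = n" and d: "length d = n"
  shows "chan_prob eps (flip_outputs c ys) d = chan_prob eps ys (map2 (\<noteq>) d c)"
  unfolding chan_prob_def
proof (rule prod.cong)
  show "{..<length d} = {..<length (map2 (\<noteq>) d c)}"
    using c d by simp
  fix i assume "i \<in> {..<length (map2 (\<noteq>) d c)}"
  then have i: "i < n" using c d by simp
  then have y: "ys ! i \<in> out_alph M" "- (ys ! i) \<in> out_alph M"
    using ys out_seqs_nth_mem uminus_mem_out_alph by blast+
  show "eps (flip_outputs c ys ! i) (if d ! i then 1 else 0)
      = eps (ys ! i) (if map2 (\<noteq>) d c ! i then 1 else 0)"
    using sym y i c d ys by (auto simp: flip_outputs_def out_seqs_def)
qed

lemma ml_error_prob_eq_zero_word: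
  assumes sym: "\<forall>y\<in>out_alph M. eps y 1 = eps (- y) 0"
    and code: "binary_linear_code n C" and cC: "c \<in> C"
  shows "ml_error_prob M n eps C c = ml_error_prob M n eps C (replicate n False)"
proof -
  let ?z = "replicate n False" and ?Y = "out_seqs M n" and ?f = "flip_outputs c"
  define t where "t d = map2 (\<noteq>) d c" for d
  have len: "length d = n" if "d \<in> C" for d
    using binary_linear_code_length[OF code that] .
  have bij: "bij_betw t C C"
    unfolding t_def by (rule binary_linear_code_translate_bij[OF code cC])
  have t_c: "t c = ?z"
    unfolding t_def using map2_xor_self[of c] len[OF cC] by simp
  have len_f: "length c = length ys" if "ys \<in> ?Y" for ys
    using that len[OF cC] by (simp add: out_seqs_def)
  have prob: "chan_prob eps (?f ys) d = chan_prob eps ys (t d)" if "ys \<in> ?Y" "d \<in> C" for ys d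
    using chan_prob_flip_outputs[OF sym that(1) len[OF cC] len[OF that(2)]] by (simp add: t_def)
  have prob_c: "chan_prob eps (?f ys) c = chan_prob eps ys ?z" if "ys \<in> ?Y" for ys
    using prob[OF that cC] t_c by simp
  have error_iff: "(\<exists>d\<in>C. d \<noteq> c \<and> chan_prob eps (?f ys) d \<ge> chan_prob eps ys ?z)
      \<longleftrightarrow> (\<exists>e\<in>C. e \<noteq> ?z \<and> chan_prob eps ys e \<ge> chan_prob eps ys ?z)"
    if ys: "ys \<in> ?Y" for ys
  proof -
    have "(\<exists>d\<in>C. d \<noteq> c \<and> chan_prob eps (?f ys) d \<ge> chan_prob eps ys ?z)
        \<longleftrightarrow> (\<exists>d\<in>C. t d \<noteq> t c \<and> chan_prob eps ys (t d) \<ge> chan_prob eps ys (t c))"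
      using inj_on_eq_iff[OF bij_betw_imp_inj_on[OF bij] _ cC]
      by (intro bex_cong refl) (simp add: prob[OF ys] t_c)
    also have "\<dots> \<longleftrightarrow> (\<exists>e\<in>t ` C. e \<noteq> ?z \<and> chan_prob eps ys e \<ge> chan_prob eps ys ?z)"
      unfolding t_c by blast
    finally show ?thesis unfolding bij_betw_imp_surj_on[OF bij] .
  qed
  have "ml_error_prob M n eps C ?z = ml_error_prob M n eps C c"
    unfolding ml_error_prob_def
  proof (rule sum.reindex_bij_witness[of _ ?f ?f])
    fix ys assume ys: "ys \<in> ?Y"
    show "?f (?f ys) = ys" using flip_outputs_flip_outputs[OF len_f[OF ys]] .
    show "?f ys \<in> ?Y" using flip_outputs_mem_out_seqs[OF len[OF cC] ys] .
    show "(if \<exists>d\<in>C. d \<noteq> c \<and> chan_prob eps (?f ys) d \<ge> chan_prob eps (?f ys) c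
          then chan_prob eps (?f ys) c else 0)
        = (if \<exists>e\<in>C. e \<noteq> ?z \<and> chan_prob eps ys e \<ge> chan_prob eps ys ?z
          then chan_prob eps ys ?z else 0)"
      by (simp only: error_iff[OF ys] prob_c[OF ys])
  qed (use flip_outputs_flip_outputs len_f flip_outputs_mem_out_seqs[OF len[OF cC]] in auto)
  then show ?thesis by simp
qed

theorem theorem1:
  fixes M n :: nat and eps :: "int \<Rightarrow> nat \<Rightarrow> real" and C :: "bool list set"
    and c :: "bool list"
  assumes "M \<ge> 1"
    and "\<forall>y\<in>out_alph M. \<forall>x\<in>{0,1}. eps y x \<ge> 0"
    and "\<forall>x\<in>{0,1}. (\<Sum>y\<in>out_alph M. eps y x) = 1"
    and "\<forall>y\<in>out_alph M. eps y 1 = eps (- y) 0"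
    and "binary_linear_code n C"
    and "c \<in> C"
  shows "ml_error_prob M n eps C c \<le> the_bound M n eps C"
  using ml_error_prob_eq_zero_word[OF assms(4-6)]
    ml_error_prob_zero_word_le_the_bound[OF assms(2,5)]
  by simp

end
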